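(* Let $\tau = \beta/\alpha$ and $n=2$. Let $H$ be the $2\times 2$ matrix with entries $H_{ii} = \gamma_i$ and $H_{ij} = -(\beta/\alpha)\frac{\gamma_i+\gamma_j}{2}$ for $i \neq j$. Then $H$ is positive definite if and only if \[ \sqrt{\max \left\{ \frac{\gamma_1}{\gamma_2}, \frac{\gamma_2}{\gamma_1} \right\}} \leq \frac{1+\sqrt{1 - \tau^2}}{\tau}. \] Under this condition, the Hessian of $U_{\mathrm{ISP}}$ with respect to $(p^s_1,p^s_2)$ in the region where both demands are strictly positive, given by $-2\alpha H$, is negative definite, and so $U_{\mathrm{ISP}}$ is a concave function of $(p^s_1, p^s_2)$ in that region.
   Context: Setting: a single ISP and $n=2$ content providers (CPs). For CP $i$, $p^s_i$ is the price per unit demand paid by internauts to the ISP for access to CP $i$'s content, $p^c_i$ the price per unit demand paid to CP $i$, $p^a_i \geq 0$ CP $i$'s advertising revenue per unit demand, and $p_i = p^s_i + p^c_i$. When both demands are strictly positive, demand for CP $i$'s content is $d_i = D_0 - \alpha p_i + \beta p_j$ ($j \neq i$), with $\alpha > \beta > 0$. In the ex post regulation game the ISP and CPs set prices first, and then a regulator sets the side payment $p^d_i$ from CP $i$ to the ISP by maximizing $U_{\mathrm{ISP},i}^{\gamma_i} U_{\mathrm{CP},i}^{1-\gamma_i}$, where $\gamma_i \in (0,1)$ is the relative weight of the ISP versus CP $i$; as a result the ISP receives the fraction $\gamma_i$ and CP $i$ the fraction $1-\gamma_i$ of the net revenue per unit demand $p_i + p^a_i$. Hence the ISP utility is $U_{\mathrm{ISP}}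 = \sum_i d_i \gamma_i (p_i + p^a_i)$. The condition that $H$ be positive definite is imposed to keep $U_{\mathrm{ISP}}$ concave in $(p^s_1,p^s_2)$ in the region of strictly positive demands. *)

theory Defs
  imports "HOL-Analysis.Analysis"
begin

definition pos_def :: "real^'n^'n \<Rightarrow> bool" where
  "pos_def M \<longleftrightarrow> (\<forall>x. x \<noteq> 0 \<longrightarrow> x \<bullet> (M *v x) > 0)"

definition neg_def :: "real^'n^'n \<Rightarrow> bool" where
  "neg_def M \<longleftrightarrow> (\<forall>x. x \<noteq> 0 \<longrightarrow> x \<bullet> (M *v x) < 0)"

definition Hmat :: "real \<Rightarrow> real \<Rightarrow> real^2 \<Rightarrow> real^2^2" where
  "Hmat \<alpha> \<beta> \<gamma> = (\<chi> i j. if i = j then \<gamma>$i else - (\<beta>/\<alpha>) * ((\<gamma>$i + \<gamma>$j) / 2))"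

definition other :: "2 \<Rightarrow> 2" where
  "other i = (if i = 1 then 2 else 1)"

text \<open>Demand for CP i's content (formula valid where both demands are strictly positive),
  as a function of the ISP prices ps, with CP prices pc fixed; p_i = ps_i + pc_i.\<close>
definition demand :: "real \<Rightarrow> real \<Rightarrow> real \<Rightarrow> real^2 \<Rightarrow> real^2 \<Rightarrow> 2 \<Rightarrow> real" where
  "demand D0 \<alpha> \<beta> pc ps i =
     D0 - \<alpha> * (ps$i + pc$i) + \<beta> * (ps$(other i) + pc$(other i))"

definition pos_region :: "real \<Rightarrow> real \<Rightarrow> real \<Rightarrow> real^2 \<Rightarrow> (real^2) set" where
  "pos_region D0 \<alpha> \<beta> pc = {ps. \<forall>i. demand D0 \<alpha> \<beta> pc ps i > 0}"

definition U_ISP :: "real \<Rightarrow> real \<Rightarrow> real \<Rightarrow> real^2 \<Rightarrow> real^2 \<Rightarrow> real^2 \<Rightarrow> real^2 \<Rightarrow> real" where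
  "U_ISP D0 \<alpha> \<beta> \<gamma> pc pa ps =
     (\<Sum>i\<in>UNIV. demand D0 \<alpha> \<beta> pc ps i * \<gamma>$i * (ps$i + pc$i + pa$i))"

end

theory Submission
  imports Defs
begin

text \<open>
  The quadratic form of \<open>H\<close> is \<open>\<gamma>\<^sub>1 x\<^sub>1\<^sup>2 + \<gamma>\<^sub>2 x\<^sub>2\<^sup>2 - \<tau> (\<gamma>\<^sub>1 + \<gamma>\<^sub>2) x\<^sub>1 x\<^sub>2\<close>,
  so \<open>H\<close> is positive definite iff \<open>\<tau>\<^sup>2 (\<gamma>\<^sub>1 + \<gamma>\<^sub>2)\<^sup>2 < 4 \<gamma>\<^sub>1 \<gamma>\<^sub>2\<close>. With
  \<open>s = sqrt (\<gamma>\<^sub>1 / \<gamma>\<^sub>2) \<ge> 1\<close> (say) this reads \<open>\<tau> s\<^sup>2 - 2 s + \<tau> < 0\<close>, i.e. \<open>s\<close> lies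
  between the roots \<open>(1 \<plusminus> sqrt (1 - \<tau>\<^sup>2)) / \<tau>\<close>; their product is \<open>1\<close>, so only the larger
  root constrains \<open>s\<close>.

  In the ISP prices, \<open>U\<^sub>I\<^sub>S\<^sub>P\<close> is the quadratic polynomial \<open>c + b \<bullet> p - \<alpha> p \<bullet> H p\<close>, so its
  gradient is \<open>b - 2 \<alpha> H p\<close> and its Hessian \<open>-2 \<alpha> H\<close>. Concavity on the convex region of
  positive demands follows from \<open>q (u x + v y) = u q x + v q y - u v q (x - y)\<close> for
  \<open>u + v = 1\<close> and any quadratic form \<open>q\<close>.
\<close>

lemma quadratic_form_convex_combination:
  fixes M :: "real^'n^'n"
  assumes "u + v = 1"
  shows "(u *\<^sub>R x + v *\<^sub>R y) \<bullet> (M *v (u *\<^sub>R x + v *\<^sub>R y))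
    = u * (x \<bullet> (M *v x)) + v * (y \<bullet> (M *v y)) - u * v * ((x - y) \<bullet> (M *v (x - y)))"
proof -
  have v: "v = 1 - u" using assms by simp
  show ?thesis
    unfolding v by (simp add: matrix_vector_right_distrib matrix_vector_mult_diff_distrib
        inner_add_left inner_add_right inner_diff_left inner_diff_right
        matrix_vector_mult_scaleR algebra_simps power2_eq_square)
qed

lemma pos_def_quadratic_form_nonneg:
  fixes M :: "real^'n^'n"
  assumes "pos_def M"
  shows "0 \<le> x \<bullet> (M *v x)"
  using assms by (cases "x = 0") (auto simp: pos_def_def less_imp_le)

lemma neg_def_scaleR_pos_def:
  fixes M :: "real^'n^'n"
  assumes "pos_def M" and "c < 0"
  shows "neg_def (c *\<^sub>R M)"
  using assms
  by (auto simp: pos_def_def neg_def_def mult_neg_pos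
      simp flip: scaleR_matrix_vector_assoc)

lemma concave_on_quadratic:
  fixes M :: "real^'n^'n"
  assumes "convex S" and "0 \<le> a" and psd: "\<And>x. 0 \<le> x \<bullet> (M *v x)"
  shows "concave_on S (\<lambda>x. c + b \<bullet> x - a * (x \<bullet> (M *v x)))"
  unfolding concave_on_iff
proof (intro conjI assms ballI allI impI)
  fix x y and u v :: real
  assume "0 \<le> u" "0 \<le> v" and uv: "u + v = 1"
  have affine: "u * (c + b \<bullet> x) + v * (c + b \<bullet> y) = c + b \<bullet> (u *\<^sub>R x + v *\<^sub>R y)"
    using uv by (simp add: inner_add_right algebra_simps flip: distrib_left)
  have "0 \<le> a * (u * v * ((x - y) \<bullet> (M *v (x - y))))"
    using \<open>0 \<le> a\<close> \<open>0 \<le> u\<close> \<open>0 \<le> v\<close> psd by simp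
  then show "u * (c + b \<bullet> x - a * (x \<bullet> (M *v x))) + v * (c + b \<bullet> y - a * (y \<bullet> (M *v y)))
      \<le> c + b \<bullet> (u *\<^sub>R x + v *\<^sub>R y)
         - a * ((u *\<^sub>R x + v *\<^sub>R y) \<bullet> (M *v (u *\<^sub>R x + v *\<^sub>R y)))"
    unfolding quadratic_form_convex_combination[OF uv] using affine
    by (simp add: algebra_simps)
qed

lemma inner_matrix_vector_symmetric:
  fixes M :: "real^'n^'n"
  assumes "transpose M = M"
  shows "x \<bullet> (M *v y) = (M *v x) \<bullet> y"
  by (metis assms dot_lmul_matrix vector_transpose_matrix)

lemma has_derivative_matrix_vector_mult:
  fixes M :: "real^'n^'n"
  shows "((*v) M has_derivative (*v) M) F"
  using matrix_vector_mul_bounded_linear by (rule bounded_linear.has_derivative) (rule has_derivative_ident)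

lemma has_derivative_quadratic:
  fixes M :: "real^'n^'n"
  assumes "transpose M = M"
  shows "((\<lambda>x. c + b \<bullet> x - a * (x \<bullet> (M *v x)))
          has_derivative (\<lambda>h. (b - (2 * a) *\<^sub>R (M *v x)) \<bullet> h)) (at x)"
proof -
  have "((\<lambda>x. c + b \<bullet> x - a * (x \<bullet> (M *v x)))
          has_derivative (\<lambda>h. 0 + b \<bullet> h - a * (x \<bullet> (M *v h) + h \<bullet> (M *v x)))) (at x)"
    by (intro has_derivative_diff has_derivative_add has_derivative_const has_derivative_mult_right
        has_derivative_inner has_derivative_inner_right has_derivative_ident
        has_derivative_matrix_vector_mult)
  moreover have "(\<lambda>h. 0 + b \<bullet> h - a * (x \<bullet> (M *v h) + h \<bullet> (M *v x)))
      = (\<lambda>h. (b - (2 * a) *\<^sub>R (M *v x)) \<bullet> h)"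
    using inner_matrix_vector_symmetric[OF assms, of x]
    by (simp add: fun_eq_iff inner_diff_left inner_diff_right inner_commute)
  ultimately show ?thesis
    by simp
qed

lemma has_derivative_quadratic_gradient:
  fixes M :: "real^'n^'n"
  shows "((\<lambda>x. b - (2 * a) *\<^sub>R (M *v x)) has_derivative (\<lambda>h. ((-2) * a) *\<^sub>R (M *v h))) (at x)"
proof -
  have "((\<lambda>x. b - (2 * a) *\<^sub>R (M *v x)) has_derivative (\<lambda>h. 0 - (2 * a) *\<^sub>R (M *v h))) (at x)"
    by (intro has_derivative_diff has_derivative_const has_derivative_scaleR_right
        has_derivative_matrix_vector_mult)
  then show ?thesis
    by (rule has_derivative_eq_rhs) auto
qed

lemma binary_quadratic_form_pos_def_iff:
  fixes p r k :: real
  assumes "0 < p"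
  shows "(\<forall>x::real^2. x \<noteq> 0 \<longrightarrow> 0 < p * (x$1)^2 + r * (x$2)^2 - k * (x$1 * x$2))
     \<longleftrightarrow> k^2 < 4 * p * r"
proof
  assume pos: "\<forall>x::real^2. x \<noteq> 0 \<longrightarrow> 0 < p * (x$1)^2 + r * (x$2)^2 - k * (x$1 * x$2)"
  have "(vector [k, 2 * p] :: real^2) $ 2 \<noteq> 0"
    using assms by simp
  then have "vector [k, 2 * p] \<noteq> (0::real^2)"
    by (metis zero_index)
  with pos have "0 < p * k^2 + r * (2 * p)^2 - k * (k * (2 * p))"
    by force
  then have "0 < p * (4 * p * r - k^2)"
    by (simp add: power2_eq_square algebra_simps)
  then show "k^2 < 4 * p * r"
    using assms by (simp add: zero_less_mult_iff)
next
  assume disc: "k^2 < 4 * p * r"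
  show "\<forall>x::real^2. x \<noteq> 0 \<longrightarrow> 0 < p * (x$1)^2 + r * (x$2)^2 - k * (x$1 * x$2)"
  proof (intro allI impI)
    fix x :: "real^2"
    assume "x \<noteq> 0"
    then have "x$1 \<noteq> 0 \<or> x$2 \<noteq> 0"
      by (auto simp: vec_eq_iff forall_2)
    moreover have "4 * p * (p * (x$1)^2 + r * (x$2)^2 - k * (x$1 * x$2))
        = (2 * p * x$1 - k * x$2)^2 + (4 * p * r - k^2) * (x$2)^2"
      by (simp add: power2_eq_square algebra_simps)
    ultimately have "0 < 4 * p * (p * (x$1)^2 + r * (x$2)^2 - k * (x$1 * x$2))"
      using assms disc
      by (smt (verit) mult_pos_pos power2_less_0 zero_less_power2 mult_eq_0_iff)
    then show "0 < p * (x$1)^2 + r * (x$2)^2 - k * (x$1 * x$2)"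
      using assms by (simp add: zero_less_mult_iff)
  qed
qed

lemma Hmat_quadratic_form:
  "x \<bullet> (Hmat \<alpha> \<beta> \<gamma> *v x)
    = \<gamma>$1 * (x$1)^2 + \<gamma>$2 * (x$2)^2 - (\<beta> / \<alpha>) * (\<gamma>$1 + \<gamma>$2) * (x$1 * x$2)"
  by (simp add: inner_vec_def matrix_vector_mult_def sum_2 Hmat_def power2_eq_square algebra_simps)

lemma transpose_Hmat: "transpose (Hmat \<alpha> \<beta> \<gamma>) = Hmat \<alpha> \<beta> \<gamma>"
  by (simp add: transpose_def Hmat_def vec_eq_iff add.commute)

lemma pos_def_Hmat_iff:
  assumes "0 < \<gamma>$1"
  shows "pos_def (Hmat \<alpha> \<beta> \<gamma>) \<longleftrightarrow> (\<beta> / \<alpha>)^2 * (\<gamma>$1 + \<gamma>$2)^2 < 4 * \<gamma>$1 * \<gamma>$2"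
  unfolding pos_def_def Hmat_quadratic_form power_mult_distrib[symmetric]
  by (rule binary_quadratic_form_pos_def_iff[OF assms])

lemma quadratic_neg_iff_less_larger_root:
  fixes t s :: real
  assumes t: "0 < t" "t < 1" and s: "1 \<le> s"
  shows "t * s^2 - 2 * s + t < 0 \<longleftrightarrow> s < (1 + sqrt (1 - t^2)) / t"
proof -
  define u where "u = sqrt (1 - t^2)"
  have "t^2 < 1"
    using t by (simp add: power_less_one_iff)
  then have u2: "u^2 = 1 - t^2"
    by (simp add: u_def)
  have "(1 - t)^2 < 1 - t^2"
    using t by (simp add: power2_eq_square algebra_simps)
  then have "1 - t < u"
    unfolding u_def by (rule real_less_rsqrt)
  moreover have "t \<le> s * t"
    using mult_right_mono[OF s, of t] t by simp
  ultimately have "1 - u < s * t"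
    by linarith
  then have "(1 - u) / t < s"
    using t by (simp add: field_simps)
  moreover have "t * s^2 - 2 * s + t = t * (s - (1 - u) / t) * (s - (1 + u) / t)"
    using t u2 by (simp add: field_simps power2_eq_square) (metis distrib_left mult.right_neutral)
  ultimately show ?thesis
    using t by (simp add: u_def mult_less_0_iff)
qed

lemma discriminant_pos_iff_sqrt_ratio:
  fixes a b t :: real
  assumes b: "0 < b" "b \<le> a" and t: "0 < t" "t < 1"
  shows "t^2 * (a + b)^2 < 4 * a * b \<longleftrightarrow> sqrt (a / b) < (1 + sqrt (1 - t^2)) / t"
proof -
  define s where "s = sqrt (a / b)"
  have "1 \<le> s"
    using b by (simp add: s_def)
  have "a = s^2 * b"
    using b by (simp add: s_def)
  then have "4 * a * b - t^2 * (a + b)^2 = b^2 * (2 * s + t * (1 + s^2)) * - (t * s^2 - 2 * s + t)"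
    by (simp add: power2_eq_square algebra_simps)
  moreover have "0 < b^2 * (2 * s + t * (1 + s^2))"
    using b t \<open>1 \<le> s\<close> by (simp add: add_pos_nonneg)
  ultimately have "t^2 * (a + b)^2 < 4 * a * b \<longleftrightarrow> t * s^2 - 2 * s + t < 0"
    by (smt (verit) zero_less_mult_iff)
  with quadratic_neg_iff_less_larger_root[OF t \<open>1 \<le> s\<close>] show ?thesis
    by (simp add: s_def)
qed

lemma discriminant_pos_iff_sqrt_max_ratio:
  fixes a b t :: real
  assumes "0 < a" "0 < b" and t: "0 < t" "t < 1"
  shows "t^2 * (a + b)^2 < 4 * a * b
    \<longleftrightarrow> sqrt (max (a / b) (b / a)) < (1 + sqrt (1 - t^2)) / t"
proof (cases "b \<le> a")
  case True
  then have "b / a \<le> 1" "1 \<le> a / b"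
    using assms by simp_all
  then have "max (a / b) (b / a) = a / b"
    by (intro max_absorb1) linarith
  then show ?thesis
    using discriminant_pos_iff_sqrt_ratio[OF \<open>0 < b\<close> True t] by simp
next
  case False
  then have "a / b \<le> 1" "1 \<le> b / a"
    using assms by simp_all
  then have "max (a / b) (b / a) = b / a"
    by (intro max_absorb2) linarith
  then show ?thesis
    using discriminant_pos_iff_sqrt_ratio[OF \<open>0 < a\<close> _ t, of b] False
    by (simp add: add.commute mult.commute mult.left_commute)
qed

lemma other_simps [simp]: "other 1 = 2" "other 2 = 1"
  by (simp_all add: other_def)

lemma demand_affine:
  "demand D0 \<alpha> \<beta> pc ps i
    = (D0 - \<alpha> * pc$i + \<beta> * pc$(other i)) + (\<chi> j. if j = i then - \<alpha> else \<beta>) \<bullet> ps"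
  using exhaust_2[of i] by (auto simp: demand_def inner_vec_def sum_2 algebra_simps)

lemma convex_pos_region: "convex (pos_region D0 \<alpha> \<beta> pc)"
proof -
  have halfspace: "{ps. 0 < demand D0 \<alpha> \<beta> pc ps i}
      = {ps. - (D0 - \<alpha> * pc$i + \<beta> * pc$(other i)) < (\<chi> j. if j = i then - \<alpha> else \<beta>) \<bullet> ps}"
    for i
    by (auto simp: demand_affine)
  have "pos_region D0 \<alpha> \<beta> pc = (\<Inter>i. {ps. 0 < demand D0 \<alpha> \<beta> pc ps i})"
    by (auto simp: pos_region_def)
  then show ?thesis
    by (simp add: halfspace convex_INT convex_halfspace_gt)
qed

lemma U_ISP_quadratic:
  assumes "\<alpha> \<noteq> 0"
  shows "\<exists>b c. U_ISP D0 \<alpha> \<beta> \<gamma> pc pa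
           = (\<lambda>ps. c + b \<bullet> ps - \<alpha> * (ps \<bullet> (Hmat \<alpha> \<beta> \<gamma> *v ps)))"
proof (intro exI ext)
  fix ps :: "real^2"
  let ?b = "\<chi> i. \<gamma>$i * (D0 - \<alpha> * pc$i + \<beta> * pc$(other i) - \<alpha> * (pc$i + pa$i))
                 + \<beta> * \<gamma>$(other i) * (pc$(other i) + pa$(other i))"
  show "U_ISP D0 \<alpha> \<beta> \<gamma> pc pa ps
      = U_ISP D0 \<alpha> \<beta> \<gamma> pc pa 0 + ?b \<bullet> ps - \<alpha> * (ps \<bullet> (Hmat \<alpha> \<beta> \<gamma> *v ps))"
    unfolding Hmat_quadratic_form using assms
    by (simp add: U_ISP_def demand_def inner_vec_def sum_2 power2_eq_square field_simps)
qed

theorem proposition1: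
  fixes D0 \<alpha> \<beta> :: real and \<gamma> pc pa :: "real^2"
  assumes "\<alpha> > \<beta>" and "\<beta> > 0"
    and "\<forall>i. 0 < \<gamma>$i \<and> \<gamma>$i < 1"
    and "\<forall>i. pa$i \<ge> 0"
  defines "\<tau> \<equiv> \<beta> / \<alpha>"
  shows "(pos_def (Hmat \<alpha> \<beta> \<gamma>) \<longleftrightarrow>
           sqrt (max (\<gamma>$1 / \<gamma>$2) (\<gamma>$2 / \<gamma>$1)) < (1 + sqrt (1 - \<tau>^2)) / \<tau>)
      \<and> (sqrt (max (\<gamma>$1 / \<gamma>$2) (\<gamma>$2 / \<gamma>$1)) < (1 + sqrt (1 - \<tau>^2)) / \<tau> \<longrightarrow>
           (\<exists>G. \<forall>ps \<in> pos_region D0 \<alpha> \<beta> pc.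
               (U_ISP D0 \<alpha> \<beta> \<gamma> pc pa has_derivative (\<lambda>h. G ps \<bullet> h)) (at ps) \<and>
               (G has_derivative (\<lambda>h. ((-2) * \<alpha>) *\<^sub>R (Hmat \<alpha> \<beta> \<gamma> *v h))) (at ps))
           \<and> neg_def (((-2) * \<alpha>) *\<^sub>R Hmat \<alpha> \<beta> \<gamma>)
           \<and> concave_on (pos_region D0 \<alpha> \<beta> pc) (U_ISP D0 \<alpha> \<beta> \<gamma> pc pa))"
proof -
  have "0 < \<alpha>"
    using assms(1,2) by simp
  have \<gamma>: "0 < \<gamma>$1" "0 < \<gamma>$2"
    using assms(3) by auto
  have \<tau>: "0 < \<tau>" "\<tau> < 1"
    using assms(1,2) by (simp_all add: \<tau>_def)
  have pos_def_iff: "pos_def (Hmat \<alpha> \<beta> \<gamma>)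
      \<longleftrightarrow> sqrt (max (\<gamma>$1 / \<gamma>$2) (\<gamma>$2 / \<gamma>$1)) < (1 + sqrt (1 - \<tau>^2)) / \<tau>"
    using pos_def_Hmat_iff[OF \<gamma>(1)] discriminant_pos_iff_sqrt_max_ratio[OF \<gamma> \<tau>]
    by (simp add: \<tau>_def)
  obtain b c where U: "U_ISP D0 \<alpha> \<beta> \<gamma> pc pa
      = (\<lambda>ps. c + b \<bullet> ps - \<alpha> * (ps \<bullet> (Hmat \<alpha> \<beta> \<gamma> *v ps)))"
    using U_ISP_quadratic[of \<alpha>] \<open>0 < \<alpha>\<close> by blast
  have "\<forall>ps. (U_ISP D0 \<alpha> \<beta> \<gamma> pc pa has_derivative
                (\<lambda>h. (b - (2 * \<alpha>) *\<^sub>R (Hmat \<alpha> \<beta> \<gamma> *v ps)) \<bullet> h)) (at ps)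
      \<and> ((\<lambda>ps. b - (2 * \<alpha>) *\<^sub>R (Hmat \<alpha> \<beta> \<gamma> *v ps))
            has_derivative (\<lambda>h. ((-2) * \<alpha>) *\<^sub>R (Hmat \<alpha> \<beta> \<gamma> *v h))) (at ps)"
    unfolding U using has_derivative_quadratic[OF transpose_Hmat] has_derivative_quadratic_gradient
    by blast
  moreover have "pos_def (Hmat \<alpha> \<beta> \<gamma>) \<Longrightarrow> concave_on (pos_region D0 \<alpha> \<beta> pc) (U_ISP D0 \<alpha> \<beta> \<gamma> pc pa)"
    unfolding U using convex_pos_region \<open>0 < \<alpha>\<close>
    by (intro concave_on_quadratic pos_def_quadratic_form_nonneg) auto
  ultimately show ?thesis
    using pos_def_iff neg_def_scaleR_pos_def[of "Hmat \<alpha> \<beta> \<gamma>" "(-2) * \<alpha>"] \<open>0 < \<alpha>\<close>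
    by fastforce
qed

end
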